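(* Let $|\Psi\rangle_{A\bar AE}$ be a pure (sub-)normalized state with $\mathcal H_A$ an $n$-qubit system. Let $\rho_{AE}:=\sum_z|z\rangle\langle z|_A\,{\rm Tr}_{\bar A}(|\Psi\rangle\langle\Psi|)\,|z\rangle\langle z|_A$ (the state after a $Z$-basis measurement of $A$), and define the phase distribution $\Pr(X=x):=\langle\tilde x|_A\rho^\Psi_A|\tilde x\rangle_A$ for $x\in\{0,1\}^n$, where $\rho^\Psi_A$ is the reduced state of $|\Psi\rangle$ on $A$. If $H_{1/2}(X)\le H^{\rm th}_{1/2}$ for a constant $H^{\rm th}_{1/2}$, then $$H_{\min}(\rho_{AE}|E)\ge n-H^{\rm th}_{1/2}.$$
   Context: $|z\rangle$ is the computational basis of $n$ qubits and $|\tilde x\rangle:=2^{-n/2}\sum_z(-1)^{x\cdot z}|z\rangle$. R\'enyi entropy of order $1/2$: $H_{1/2}(X):=2\log_2\sum_x\sqrt{\Pr(X=x)}$. $H_{\min}(\rho_{AE}|E)$ is the maximum $\lambda$ with $2^{-\lambda}I_A\otimes\sigma_E\ge\rho_{AE}$ for some normalized state $\sigma_E$. *)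

theory Defs
  imports Complex_Main "HOL-Library.Extended_Real"
begin

text \<open>Finite-dimensional operators are represented as complex-valued kernels
  M i j over a finite index set I.  The system A (n qubits) is indexed by
  z < 2^n (bit i of z is the i-th qubit); the systems Abar and E are indexed by
  arbitrary finite types 'b and 'e.\<close>

definition psd_on :: "'i set \<Rightarrow> ('i \<Rightarrow> 'i \<Rightarrow> complex) \<Rightarrow> bool" where
  "psd_on I M \<longleftrightarrow> (\<forall>v :: 'i \<Rightarrow> complex.
     Im (\<Sum>i\<in>I. \<Sum>j\<in>I. cnj (v i) * M i j * v j) = 0 \<and>
     Re (\<Sum>i\<in>I. \<Sum>j\<in>I. cnj (v i) * M i j * v j) \<ge> 0)"

definition density :: "('e::finite \<Rightarrow> 'e \<Rightarrow> complex) \<Rightarrow> bool" where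
  "density \<sigma> \<longleftrightarrow> psd_on UNIV \<sigma> \<and> (\<Sum>e\<in>UNIV. \<sigma> e e) = 1"

definition A_idx :: "nat \<Rightarrow> nat set" where
  "A_idx n = {..<2^n}"

text \<open>Conditional min-entropy H_min(rho_AE|E): supremum (= maximum, or +infinity
  for the zero operator) of lambda such that 2^(-lambda) I_A \<otimes> sigma_E \<ge> rho_AE.\<close>
definition Hmin :: "nat \<Rightarrow> (nat \<times> 'e::finite \<Rightarrow> nat \<times> 'e \<Rightarrow> complex) \<Rightarrow> ereal" where
  "Hmin n \<rho> = Sup {ereal l | l::real. \<exists>\<sigma>. density \<sigma> \<and>
     psd_on (A_idx n \<times> UNIV)
       (\<lambda>(z,e) (z',e'). complex_of_real (2 powr (-l)) * (if z = z' then 1 else 0) * \<sigma> e e'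
                        - \<rho> (z,e) (z',e'))}"

definition norm2 :: "nat \<Rightarrow> (nat \<Rightarrow> 'b::finite \<Rightarrow> 'e::finite \<Rightarrow> complex) \<Rightarrow> real" where
  "norm2 n \<psi> = (\<Sum>z\<in>A_idx n. \<Sum>a\<in>UNIV. \<Sum>e\<in>UNIV. (cmod (\<psi> z a e))\<^sup>2)"

definition ptrace_Abar :: "(nat \<Rightarrow> 'b::finite \<Rightarrow> 'e \<Rightarrow> complex) \<Rightarrow> (nat \<times> 'e \<Rightarrow> nat \<times> 'e \<Rightarrow> complex)" where
  "ptrace_Abar \<psi> = (\<lambda>(z,e) (z',e'). \<Sum>a\<in>UNIV. \<psi> z a e * cnj (\<psi> z' a e'))"

definition rho_AE :: "nat \<Rightarrow> (nat \<Rightarrow> 'b::finite \<Rightarrow> 'e \<Rightarrow> complex) \<Rightarrow> (nat \<times> 'e \<Rightarrow> nat \<times> 'e \<Rightarrow> complex)" where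
  "rho_AE n \<psi> = (\<lambda>(z,e) (z',e'). \<Sum>w\<in>A_idx n.
      (if z = w then 1 else 0) * ptrace_Abar \<psi> (w,e) (w,e') * (if w = z' then 1 else 0))"

definition rho_A :: "(nat \<Rightarrow> 'b::finite \<Rightarrow> 'e::finite \<Rightarrow> complex) \<Rightarrow> nat \<Rightarrow> nat \<Rightarrow> complex" where
  "rho_A \<psi> z z' = (\<Sum>a\<in>UNIV. \<Sum>e\<in>UNIV. \<psi> z a e * cnj (\<psi> z' a e))"

definition bdot :: "nat \<Rightarrow> nat \<Rightarrow> nat \<Rightarrow> nat" where
  "bdot n x z = (\<Sum>i<n. if bit x i \<and> bit z i then 1 else 0)"

definition xtilde :: "nat \<Rightarrow> nat \<Rightarrow> nat \<Rightarrow> complex" where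
  "xtilde n x z = complex_of_real (2 powr (- real n / 2) * (-1) ^ bdot n x z)"

definition phase_prob :: "nat \<Rightarrow> (nat \<Rightarrow> 'b::finite \<Rightarrow> 'e::finite \<Rightarrow> complex) \<Rightarrow> nat \<Rightarrow> real" where
  "phase_prob n \<psi> x = Re (\<Sum>z\<in>A_idx n. \<Sum>z'\<in>A_idx n.
      cnj (xtilde n x z) * rho_A \<psi> z z' * xtilde n x z')"

definition H_half :: "nat \<Rightarrow> (nat \<Rightarrow> real) \<Rightarrow> real" where
  "H_half n p = 2 * log 2 (\<Sum>x\<in>A_idx n. sqrt (p x))"

end

theory Submission
  imports Defs "HOL-Analysis.Convex"
begin

text \<open>Write chi_x = <x~|_A Psi for the components of Psi in the phase basis, so that
  Pr(X = x) = ||chi_x||^2 and, by Hadamard inversion, <z|_A Psi = sum_x <z|x~> chi_x with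
  |<z|x~>|^2 = 2^-n. The operator Cauchy-Schwarz inequality with weights sqrt Pr(X = x) bounds each
  block of rho_AE:
    Tr_Abar (<z|Psi><Psi|z>) <= 2^-n S sum_x Pr(X = x)^(-1/2) Tr_Abar |chi_x><chi_x|,
  where S = sum_x sqrt Pr(X = x) = 2^(H_1/2(X)/2). The operator on the right has trace S, so after
  normalisation it is a state sigma_E with rho_AE <= 2^-n S^2 I_A \<otimes> sigma_E = 2^(H_1/2(X) - n) I_A \<otimes> sigma_E.\<close>

subsection \<open>Walsh-Hadamard orthogonality\<close>

lemma bdot_0 [simp]: "bdot 0 x z = 0"
  by (simp add: bdot_def)

lemma bdot_Suc:
  "bdot (Suc n) x z = (if odd x \<and> odd z then 1 else 0) + bdot n (x div 2) (z div 2)"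
  unfolding bdot_def sum.lessThan_Suc_shift by (simp add: bit_0 bit_Suc)

lemma sum_lessThan_double: "(\<Sum>x<2 * (m::nat). f x) = (\<Sum>y<m. f (2 * y) + f (2 * y + 1))"
  by (induction m) (simp_all add: sum.distrib ac_simps)

lemma walsh_orthogonality:
  assumes "z < 2 ^ n" "z' < 2 ^ n"
  shows "(\<Sum>x<2 ^ n. (-1::real) ^ (bdot n x z + bdot n x z')) = (if z = z' then 2 ^ n else 0)"
  using assms
proof (induction n arbitrary: z z')
  case 0
  then show ?case by simp
next
  case (Suc n)
  define u u' where "u = z div 2" and "u' = z' div 2"
  define s where "s = (if odd z then 1 else 0) + (if odd z' then 1 else (0::nat))"
  have u: "u < 2 ^ n" "u' < 2 ^ n"
    using Suc.prems by (auto simp: u_def u'_def)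
  \<comment> \<open>the lowest bit of x contributes the factor 1 + (-1)^s\<close>
  have "(\<Sum>x<2 ^ Suc n. (-1::real) ^ (bdot (Suc n) x z + bdot (Suc n) x z'))
      = (1 + (-1) ^ s) * (\<Sum>y<2 ^ n. (-1::real) ^ (bdot n y u + bdot n y u'))"
    unfolding power_Suc sum_lessThan_double
    by (auto simp: bdot_Suc u_def u'_def s_def power_add sum.distrib sum_distrib_left
        algebra_simps intro!: sum.cong)
  also have "\<dots> = (1 + (-1) ^ s) * (if u = u' then 2 ^ n else 0)"
    using Suc.IH[OF u] by simp
  also have "\<dots> = (if z = z' then 2 ^ Suc n else 0)"
  proof -
    have "z = 2 * u + (if odd z then 1 else 0)" "z' = 2 * u' + (if odd z' then 1 else 0)"
      by (auto simp: u_def u'_def)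
    then show ?thesis
      by (cases "odd z"; cases "odd z'"; cases "u = u'") (auto simp: s_def)
  qed
  finally show ?case .
qed

lemma cnj_xtilde [simp]: "cnj (xtilde n x z) = xtilde n x z"
  by (simp add: xtilde_def)

lemma xtilde_mult_xtilde:
  "xtilde n x z * xtilde n x z' = of_real (2 powr (- real n) * (-1) ^ (bdot n x z + bdot n x z'))"
proof -
  have "2 powr (- real n / 2) * 2 powr (- real n / 2) = (2::real) powr (- real n)"
    by (simp add: powr_add [symmetric])
  then show ?thesis
    unfolding xtilde_def by (simp add: power_add algebra_simps flip: of_real_mult)
qed

lemma cmod_xtilde_squared: "(cmod (xtilde n x z))\<^sup>2 = 2 powr (- real n)"
proof -
  have "(cmod (xtilde n x z))\<^sup>2 = (2 powr (- real n / 2))\<^sup>2"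
    by (simp add: xtilde_def norm_mult power_mult_distrib norm_power)
  also have "\<dots> = 2 powr (- real n)"
    by (simp add: power2_eq_square powr_add [symmetric])
  finally show ?thesis .
qed

lemma xtilde_orthonormal:
  assumes "z \<in> A_idx n" "z' \<in> A_idx n"
  shows "(\<Sum>x\<in>A_idx n. xtilde n x z * xtilde n x z') = (if z = z' then 1 else 0)"
proof -
  have "(\<Sum>x\<in>A_idx n. xtilde n x z * xtilde n x z')
      = of_real (2 powr (- real n) * (\<Sum>x<2 ^ n. (-1::real) ^ (bdot n x z + bdot n x z')))"
    by (simp add: xtilde_mult_xtilde A_idx_def sum_distrib_left)
  also have "\<dots> = (if z = z' then 1 else 0)"
    using assms by (simp add: walsh_orthogonality A_idx_def powr_minus powr_realpow)
  finally show ?thesis .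
qed

definition hadamard :: "nat \<Rightarrow> (nat \<Rightarrow> 'b \<Rightarrow> 'e \<Rightarrow> complex) \<Rightarrow> nat \<Rightarrow> 'b \<Rightarrow> 'e \<Rightarrow> complex" where
  "hadamard n \<psi> x a e = (\<Sum>z\<in>A_idx n. xtilde n x z * \<psi> z a e)"

lemma hadamard_inversion:
  assumes "z \<in> A_idx n"
  shows "(\<Sum>x\<in>A_idx n. xtilde n x z * hadamard n \<psi> x a e) = \<psi> z a e"
proof -
  have "(\<Sum>x\<in>A_idx n. xtilde n x z * hadamard n \<psi> x a e)
      = (\<Sum>z'\<in>A_idx n. (\<Sum>x\<in>A_idx n. xtilde n x z * xtilde n x z') * \<psi> z' a e)"
    unfolding hadamard_def sum_distrib_left
    by (subst sum.swap) (simp add: sum_distrib_right mult.assoc)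
  also have "\<dots> = (\<Sum>z'\<in>A_idx n. if z = z' then \<psi> z' a e else 0)"
    using assms by (intro sum.cong) (auto simp: xtilde_orthonormal)
  also have "\<dots> = \<psi> z a e"
    using assms by (simp add: A_idx_def)
  finally show ?thesis .
qed

subsection \<open>Quadratic forms and Gram kernels\<close>

definition qform :: "'i set \<Rightarrow> ('i \<Rightarrow> 'i \<Rightarrow> complex) \<Rightarrow> ('i \<Rightarrow> complex) \<Rightarrow> complex" where
  "qform I M v = (\<Sum>i\<in>I. \<Sum>j\<in>I. cnj (v i) * M i j * v j)"

text \<open>gram K f is the partial trace Tr_K |f><f| of a vector f of the bipartite system K \<otimes> I.\<close>

definition gram :: "'k set \<Rightarrow> ('k \<Rightarrow> 'i \<Rightarrow> complex) \<Rightarrow> 'i \<Rightarrow> 'i \<Rightarrow> complex" where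
  "gram K f i j = (\<Sum>k\<in>K. f k i * cnj (f k j))"

definition gram_form :: "'k set \<Rightarrow> 'i set \<Rightarrow> ('k \<Rightarrow> 'i \<Rightarrow> complex) \<Rightarrow> ('i \<Rightarrow> complex) \<Rightarrow> real" where
  "gram_form K I f v = (\<Sum>k\<in>K. (cmod (\<Sum>i\<in>I. cnj (v i) * f k i))\<^sup>2)"

lemma psd_on_iff_qform: "psd_on I M \<longleftrightarrow> (\<forall>v. Im (qform I M v) = 0 \<and> 0 \<le> Re (qform I M v))"
  by (simp add: psd_on_def qform_def)

lemma qform_diff: "qform I (\<lambda>i j. A i j - B i j) v = qform I A v - qform I B v"
  by (simp add: qform_def algebra_simps sum_subtractf)

lemma qform_scale: "qform I (\<lambda>i j. c * A i j) v = c * qform I A v"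
  by (simp add: qform_def sum_distrib_left mult_ac)

lemma qform_sum: "qform I (\<lambda>i j. \<Sum>x\<in>X. A x i j) v = (\<Sum>x\<in>X. qform I (A x) v)"
  unfolding qform_def sum_distrib_left sum_distrib_right
  by (subst (2) sum.swap, subst sum.swap) (simp add: mult_ac)

lemma qform_block_diagonal:
  fixes v :: "'z \<times> 'e::finite \<Rightarrow> complex"
  assumes "finite U"
    and "\<And>z z' e e'. z \<in> U \<Longrightarrow> z' \<in> U \<Longrightarrow> M (z, e) (z', e') = (if z = z' then K z e e' else 0)"
  shows "qform (U \<times> UNIV) M v = (\<Sum>z\<in>U. qform UNIV (K z) (\<lambda>e. v (z, e)))"
proof -
  have "qform (U \<times> UNIV) M v
      = (\<Sum>z\<in>U. \<Sum>e\<in>UNIV. \<Sum>z'\<in>U. \<Sum>e'\<in>UNIV. cnj (v (z, e)) * M (z, e) (z', e') * v (z', e'))"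
    by (simp add: qform_def sum.cartesian_product')
  also have "\<dots> = (\<Sum>z\<in>U. \<Sum>e\<in>UNIV. \<Sum>z'\<in>U.
      if z = z' then (\<Sum>e'\<in>UNIV. cnj (v (z, e)) * K z e e' * v (z, e')) else 0)"
    using assms(2) by (intro sum.cong refl) auto
  also have "\<dots> = (\<Sum>z\<in>U. qform UNIV (K z) (\<lambda>e. v (z, e)))"
    using assms(1) by (simp add: qform_def)
  finally show ?thesis .
qed

lemma gram_form_nonneg: "0 \<le> gram_form K I f v"
  by (simp add: gram_form_def sum_nonneg)

lemma qform_gram: "qform I (gram K f) v = of_real (gram_form K I f v)"
proof -
  define \<beta> where "\<beta> k = (\<Sum>i\<in>I. cnj (v i) * f k i)" for k
  have "of_real (gram_form K I f v) = (\<Sum>k\<in>K. \<beta> k * cnj (\<beta> k))"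
    unfolding gram_form_def \<beta>_def of_real_sum complex_norm_square ..
  also have "\<dots> = (\<Sum>k\<in>K. \<Sum>i\<in>I. \<Sum>j\<in>I. cnj (v i) * f k i * (v j * cnj (f k j)))"
    unfolding \<beta>_def cnj_sum sum_product by simp
  also have "\<dots> = (\<Sum>i\<in>I. \<Sum>j\<in>I. \<Sum>k\<in>K. cnj (v i) * f k i * (v j * cnj (f k j)))"
    by (rule trans [OF sum.swap], intro sum.cong refl sum.swap)
  also have "\<dots> = qform I (gram K f) v"
    by (simp add: qform_def gram_def sum_distrib_left sum_distrib_right mult_ac)
  finally show ?thesis ..
qed

lemma psd_on_gram: "psd_on I (gram K f)"
  by (simp add: psd_on_iff_qform qform_gram gram_form_nonneg)

lemma trace_gram: "(\<Sum>i\<in>I. gram K f i i) = of_real (\<Sum>k\<in>K. \<Sum>i\<in>I. (cmod (f k i))\<^sup>2)"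
  unfolding gram_def of_real_sum complex_norm_square by (rule sum.swap)

lemma phase_prob_eq: "phase_prob n \<psi> x = (\<Sum>a\<in>UNIV. \<Sum>e\<in>UNIV. (cmod (hadamard n \<psi> x a e))\<^sup>2)"
proof -
  have rho_A_gram: "rho_A \<psi> = gram (UNIV \<times> UNIV) (\<lambda>k z. \<psi> z (fst k) (snd k))"
    by (simp add: fun_eq_iff rho_A_def gram_def sum.cartesian_product' del: UNIV_Times_UNIV)
  have "phase_prob n \<psi> x = Re (qform (A_idx n) (rho_A \<psi>) (xtilde n x))"
    by (simp add: phase_prob_def qform_def)
  also have "\<dots> = gram_form (UNIV \<times> UNIV) (A_idx n) (\<lambda>k z. \<psi> z (fst k) (snd k)) (xtilde n x)"
    unfolding rho_A_gram qform_gram by simp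
  finally show ?thesis
    by (simp add: gram_form_def hadamard_def sum.cartesian_product' mult.commute del: UNIV_Times_UNIV)
qed

lemma phase_prob_nonneg: "0 \<le> phase_prob n \<psi> x"
  by (simp add: phase_prob_eq sum_nonneg)

subsection \<open>Operator Cauchy-Schwarz inequality\<close>

lemma weighted_Cauchy_Schwarz_cmod:
  assumes "\<And>x. x \<in> X \<Longrightarrow> 0 < t x"
  shows "(cmod (\<Sum>x\<in>X. c x * b x))\<^sup>2
    \<le> (\<Sum>x\<in>X. (cmod (c x))\<^sup>2 * t x) * (\<Sum>x\<in>X. (cmod (b x))\<^sup>2 / t x)"
proof -
  have "cmod (\<Sum>x\<in>X. c x * b x) \<le> (\<Sum>x\<in>X. cmod (c x) * cmod (b x))"
    using norm_sum [of "\<lambda>x. c x * b x" X] by (simp add: norm_mult)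
  also have "\<dots> = (\<Sum>x\<in>X. (cmod (c x) * sqrt (t x)) * (cmod (b x) / sqrt (t x)))"
    by (intro sum.cong) (auto dest: assms)
  finally have "cmod (\<Sum>x\<in>X. c x * b x)
      \<le> (\<Sum>x\<in>X. (cmod (c x) * sqrt (t x)) * (cmod (b x) / sqrt (t x)))" .
  then have "(cmod (\<Sum>x\<in>X. c x * b x))\<^sup>2
      \<le> (\<Sum>x\<in>X. (cmod (c x) * sqrt (t x)) * (cmod (b x) / sqrt (t x)))\<^sup>2"
    by (intro power_mono) auto
  also have "\<dots> \<le> (\<Sum>x\<in>X. (cmod (c x) * sqrt (t x))\<^sup>2) * (\<Sum>x\<in>X. (cmod (b x) / sqrt (t x))\<^sup>2)"
    by (rule Cauchy_Schwarz_ineq_sum)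
  also have "\<dots> = (\<Sum>x\<in>X. (cmod (c x))\<^sup>2 * t x) * (\<Sum>x\<in>X. (cmod (b x))\<^sup>2 / t x)"
    using assms by (simp add: power_mult_distrib power_divide less_imp_le cong: sum.cong)
  finally show ?thesis .
qed

lemma gram_form_superposition_le:
  assumes "\<And>x. x \<in> X \<Longrightarrow> 0 < t x"
  shows "gram_form K I (\<lambda>k i. \<Sum>x\<in>X. h x * f x k i) v
    \<le> (\<Sum>x\<in>X. (cmod (h x))\<^sup>2 * t x) * (\<Sum>x\<in>X. gram_form K I (f x) v / t x)"
proof -
  define \<beta> where "\<beta> x k = (\<Sum>i\<in>I. cnj (v i) * f x k i)" for x k
  have "(\<Sum>i\<in>I. cnj (v i) * (\<Sum>x\<in>X. h x * f x k i)) = (\<Sum>x\<in>X. h x * \<beta> x k)" for k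
    unfolding \<beta>_def sum_distrib_left by (subst sum.swap) (simp add: mult_ac)
  then have "gram_form K I (\<lambda>k i. \<Sum>x\<in>X. h x * f x k i) v = (\<Sum>k\<in>K. (cmod (\<Sum>x\<in>X. h x * \<beta> x k))\<^sup>2)"
    by (simp add: gram_form_def)
  also have "\<dots> \<le> (\<Sum>k\<in>K. (\<Sum>x\<in>X. (cmod (h x))\<^sup>2 * t x) * (\<Sum>x\<in>X. (cmod (\<beta> x k))\<^sup>2 / t x))"
    by (intro sum_mono weighted_Cauchy_Schwarz_cmod assms)
  also have "\<dots> = (\<Sum>x\<in>X. (cmod (h x))\<^sup>2 * t x) * (\<Sum>x\<in>X. gram_form K I (f x) v / t x)"
    unfolding gram_form_def \<beta>_def sum_distrib_left [symmetric] sum_divide_distrib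
    by (subst sum.swap) (rule refl)
  finally show ?thesis .
qed

lemma density_qform_nonneg: "density \<sigma> \<Longrightarrow> 0 \<le> Re (qform UNIV \<sigma> w)"
  by (simp add: density_def psd_on_iff_qform)

lemma density_exists: "\<exists>\<sigma> :: 'e::finite \<Rightarrow> 'e \<Rightarrow> complex. density \<sigma>"
proof
  let ?f = "\<lambda>(_::unit) e. if e = (undefined::'e) then 1 else 0"
  have "(\<Sum>e\<in>UNIV. (cmod (?f () e))\<^sup>2) = (\<Sum>e\<in>UNIV. if e = (undefined::'e) then 1 else 0 :: real)"
    by (intro sum.cong) auto
  then show "density (gram UNIV ?f)"
    unfolding density_def trace_gram by (simp add: psd_on_gram)
qed

lemma density_normalize:
  assumes "psd_on UNIV T" "(\<Sum>e\<in>UNIV. T e e) = of_real S" "0 < S"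
  shows "density (\<lambda>e e'. of_real (1 / S) * T e e')"
proof -
  have "(\<Sum>e\<in>UNIV. of_real (1 / S) * T e e) = 1"
    using assms(2,3) by (simp flip: sum_divide_distrib)
  moreover have "psd_on UNIV (\<lambda>e e'. of_real (1 / S) * T e e')"
    using assms(1,3) unfolding psd_on_iff_qform qform_scale by simp
  ultimately show ?thesis
    by (simp add: density_def)
qed

subsection \<open>Min-entropy of the measured state\<close>

lemma rho_AE_block:
  assumes "z \<in> A_idx n" "z' \<in> A_idx n"
  shows "rho_AE n \<psi> (z, e) (z', e') = (if z = z' then gram UNIV (\<psi> z) e e' else 0)"
  using assms unfolding rho_AE_def
  by (auto simp: A_idx_def ptrace_Abar_def gram_def if_distrib cong: if_cong)

lemma Hmin_ge_if_blocks_dominated: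
  fixes \<psi> :: "nat \<Rightarrow> 'b::finite \<Rightarrow> 'e::finite \<Rightarrow> complex"
  assumes "density \<sigma>"
    and "\<And>z w. z \<in> A_idx n \<Longrightarrow> gram_form UNIV UNIV (\<psi> z) w \<le> 2 powr (- l) * Re (qform UNIV \<sigma> w)"
  shows "ereal l \<le> Hmin n (rho_AE n \<psi>)"
proof -
  let ?M = "\<lambda>(z, e) (z', e'). complex_of_real (2 powr (- l)) * (if z = z' then 1 else 0) * \<sigma> e e'
    - rho_AE n \<psi> (z, e) (z', e')"
  have "psd_on (A_idx n \<times> UNIV) ?M"
    unfolding psd_on_iff_qform
  proof
    fix v :: "nat \<times> 'e \<Rightarrow> complex"
    have \<sigma>_real: "qform UNIV \<sigma> w = of_real (Re (qform UNIV \<sigma> w))" for w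
      using assms(1) by (simp add: density_def psd_on_iff_qform complex_eq_iff)
    have "qform (A_idx n \<times> UNIV) ?M v = (\<Sum>z\<in>A_idx n.
        qform UNIV (\<lambda>e e'. of_real (2 powr (- l)) * \<sigma> e e' - gram UNIV (\<psi> z) e e') (\<lambda>e. v (z, e)))"
      by (rule qform_block_diagonal) (auto simp: A_idx_def rho_AE_block)
    also have "\<dots> = of_real (\<Sum>z\<in>A_idx n.
        2 powr (- l) * Re (qform UNIV \<sigma> (\<lambda>e. v (z, e))) - gram_form UNIV UNIV (\<psi> z) (\<lambda>e. v (z, e)))"
      unfolding qform_diff qform_scale qform_gram of_real_sum
      by (subst \<sigma>_real) simp
    finally show "Im (qform (A_idx n \<times> UNIV) ?M v) = 0 \<and> 0 \<le> Re (qform (A_idx n \<times> UNIV) ?M v)"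
      using assms(2) by (simp add: sum_nonneg)
  qed
  with assms(1) show ?thesis
    unfolding Hmin_def by (intro Sup_upper) blast
qed

definition phase_support :: "nat \<Rightarrow> (nat \<Rightarrow> 'b::finite \<Rightarrow> 'e::finite \<Rightarrow> complex) \<Rightarrow> nat set" where
  "phase_support n \<psi> = {x \<in> A_idx n. 0 < phase_prob n \<psi> x}"

text \<open>sum_x Pr(X = x)^(-1/2) Tr_Abar |chi_x><chi_x|: normalised, this is the state sigma_E.\<close>

definition phase_weighted :: "nat \<Rightarrow> (nat \<Rightarrow> 'b::finite \<Rightarrow> 'e::finite \<Rightarrow> complex) \<Rightarrow> 'e \<Rightarrow> 'e \<Rightarrow> complex" where
  "phase_weighted n \<psi> e e' = (\<Sum>x\<in>phase_support n \<psi>.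
     of_real (1 / sqrt (phase_prob n \<psi> x)) * gram UNIV (hadamard n \<psi> x) e e')"

lemma sum_sqrt_phase_support:
  "(\<Sum>x\<in>phase_support n \<psi>. sqrt (phase_prob n \<psi> x)) = (\<Sum>x\<in>A_idx n. sqrt (phase_prob n \<psi> x))"
  using phase_prob_nonneg [of n \<psi>]
  by (intro sum.mono_neutral_left) (auto simp: phase_support_def A_idx_def less_eq_real_def)

lemma qform_phase_weighted:
  "qform UNIV (phase_weighted n \<psi>) w = of_real (\<Sum>x\<in>phase_support n \<psi>.
     gram_form UNIV UNIV (hadamard n \<psi> x) w / sqrt (phase_prob n \<psi> x))"
  unfolding phase_weighted_def qform_sum qform_scale qform_gram by simp

lemma psd_on_phase_weighted: "psd_on UNIV (phase_weighted n \<psi>)"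
  by (auto simp: psd_on_iff_qform qform_phase_weighted
      intro!: sum_nonneg divide_nonneg_nonneg gram_form_nonneg phase_prob_nonneg)

lemma trace_phase_weighted:
  "(\<Sum>e\<in>UNIV. phase_weighted n \<psi> e e) = of_real (\<Sum>x\<in>A_idx n. sqrt (phase_prob n \<psi> x))"
proof -
  have trace_hadamard: "(\<Sum>e\<in>UNIV. gram UNIV (hadamard n \<psi> x) e e) = of_real (phase_prob n \<psi> x)" for x
    unfolding trace_gram phase_prob_eq ..
  have "(\<Sum>e\<in>UNIV. phase_weighted n \<psi> e e) = (\<Sum>x\<in>phase_support n \<psi>.
      of_real (1 / sqrt (phase_prob n \<psi> x)) * (\<Sum>e\<in>UNIV. gram UNIV (hadamard n \<psi> x) e e))"
    unfolding phase_weighted_def sum_distrib_left by (rule sum.swap)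
  also have "\<dots> = of_real (\<Sum>x\<in>phase_support n \<psi>. 1 / sqrt (phase_prob n \<psi> x) * phase_prob n \<psi> x)"
    unfolding trace_hadamard of_real_sum of_real_mult ..
  also have "(\<Sum>x\<in>phase_support n \<psi>. 1 / sqrt (phase_prob n \<psi> x) * phase_prob n \<psi> x)
      = (\<Sum>x\<in>A_idx n. sqrt (phase_prob n \<psi> x))"
    by (simp add: real_div_sqrt phase_prob_nonneg sum_sqrt_phase_support)
  finally show ?thesis .
qed

lemma phase_block_bound:
  fixes \<psi> :: "nat \<Rightarrow> 'b::finite \<Rightarrow> 'e::finite \<Rightarrow> complex"
  assumes "z \<in> A_idx n"
  shows "gram_form UNIV UNIV (\<psi> z) w
    \<le> 2 powr (- real n) * (\<Sum>x\<in>A_idx n. sqrt (phase_prob n \<psi> x)) * Re (qform UNIV (phase_weighted n \<psi>) w)"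
proof -
  let ?P = "phase_support n \<psi>" and ?p = "phase_prob n \<psi>"
  have hadamard_zero: "hadamard n \<psi> x a e = 0" if "x \<in> A_idx n" "x \<notin> ?P" for x a e
  proof -
    have "?p x = 0"
      using that phase_prob_nonneg [of n \<psi> x] by (auto simp: phase_support_def)
    then show ?thesis
      by (simp add: phase_prob_eq sum_nonneg_eq_0_iff sum_nonneg)
  qed
  have "\<psi> z a e = (\<Sum>x\<in>?P. xtilde n x z * hadamard n \<psi> x a e)" for a e
  proof -
    have "\<psi> z a e = (\<Sum>x\<in>A_idx n. xtilde n x z * hadamard n \<psi> x a e)"
      using assms by (rule hadamard_inversion [symmetric])
    also have "\<dots> = (\<Sum>x\<in>?P. xtilde n x z * hadamard n \<psi> x a e)"
      by (intro sum.mono_neutral_right) (auto simp: A_idx_def phase_support_def hadamard_zero)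
    finally show ?thesis .
  qed
  then have "\<psi> z = (\<lambda>a e. \<Sum>x\<in>?P. xtilde n x z * hadamard n \<psi> x a e)"
    by blast
  then have "gram_form UNIV UNIV (\<psi> z) w
      \<le> (\<Sum>x\<in>?P. (cmod (xtilde n x z))\<^sup>2 * sqrt (?p x))
        * (\<Sum>x\<in>?P. gram_form UNIV UNIV (hadamard n \<psi> x) w / sqrt (?p x))"
    by (simp only:) (rule gram_form_superposition_le, simp add: phase_support_def)
  also have "(\<Sum>x\<in>?P. (cmod (xtilde n x z))\<^sup>2 * sqrt (?p x)) = 2 powr (- real n) * (\<Sum>x\<in>A_idx n. sqrt (?p x))"
    by (simp add: cmod_xtilde_squared sum_sqrt_phase_support flip: sum_distrib_left)
  finally show ?thesis
    by (simp add: qform_phase_weighted)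
qed

lemma exists_density_dominating_blocks:
  fixes \<psi> :: "nat \<Rightarrow> 'b::finite \<Rightarrow> 'e::finite \<Rightarrow> complex" and n :: nat
  defines "S \<equiv> \<Sum>x\<in>A_idx n. sqrt (phase_prob n \<psi> x)"
  shows "\<exists>\<sigma>. density \<sigma> \<and> (\<forall>z\<in>A_idx n. \<forall>w.
    gram_form UNIV UNIV (\<psi> z) w \<le> 2 powr (- real n) * S\<^sup>2 * Re (qform UNIV \<sigma> w))"
proof (cases "S = 0")
  case True
  obtain \<sigma> :: "'e \<Rightarrow> 'e \<Rightarrow> complex" where "density \<sigma>"
    using density_exists by blast
  moreover have "gram_form UNIV UNIV (\<psi> z) w \<le> 2 powr (- real n) * S\<^sup>2 * Re (qform UNIV \<sigma> w)"
    if "z \<in> A_idx n" for z w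
    using phase_block_bound [OF that, of \<psi> w] True by (simp add: S_def)
  ultimately show ?thesis
    by blast
next
  case False
  let ?\<sigma> = "\<lambda>e e'. of_real (1 / S) * phase_weighted n \<psi> e e'"
  have "0 < S"
    using False by (simp add: S_def sum_nonneg phase_prob_nonneg less_le)
  with psd_on_phase_weighted trace_phase_weighted have "density ?\<sigma>"
    unfolding S_def by (rule density_normalize)
  moreover have "2 powr (- real n) * S * Re (qform UNIV (phase_weighted n \<psi>) w)
      = 2 powr (- real n) * S\<^sup>2 * Re (qform UNIV ?\<sigma> w)" for w
    unfolding qform_scale using False by (simp add: power2_eq_square)
  ultimately show ?thesis
    using phase_block_bound [of _ n \<psi>] unfolding S_def [symmetric] by metis
qed

lemma square_le_powr_if_log_le:
  fixes S h :: real
  assumes "0 \<le> S" "2 * log 2 S \<le> h"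
  shows "S\<^sup>2 \<le> 2 powr h"
proof (cases "S = 0")
  case False
  then have "S\<^sup>2 = (2 powr log 2 S)\<^sup>2"
    using assms(1) by simp
  also have "\<dots> = 2 powr (2 * log 2 S)"
    by (simp add: power2_eq_square flip: powr_add)
  also have "\<dots> \<le> 2 powr h"
    using assms(2) by simp
  finally show ?thesis .
qed simp

theorem mainTheorem6:
  fixes n :: nat and Hth :: real
    and \<psi> :: "nat \<Rightarrow> 'b::finite \<Rightarrow> 'e::finite \<Rightarrow> complex"
  assumes "norm2 n \<psi> \<le> 1"
    and "H_half n (phase_prob n \<psi>) \<le> Hth"
  shows "Hmin n (rho_AE n \<psi>) \<ge> ereal (real n - Hth)"
proof -
  define S where "S = (\<Sum>x\<in>A_idx n. sqrt (phase_prob n \<psi> x))"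
  obtain \<sigma> where \<sigma>: "density \<sigma>"
    and dominated: "\<And>z w. z \<in> A_idx n \<Longrightarrow>
      gram_form UNIV UNIV (\<psi> z) w \<le> 2 powr (- real n) * S\<^sup>2 * Re (qform UNIV \<sigma> w)"
    using exists_density_dominating_blocks [of n \<psi>] unfolding S_def by blast
  have "S\<^sup>2 \<le> 2 powr Hth"
    using assms(2) by (intro square_le_powr_if_log_le) (auto simp: S_def H_half_def sum_nonneg phase_prob_nonneg)
  then have "2 powr (- real n) * S\<^sup>2 \<le> 2 powr (- real n) * 2 powr Hth"
    by simp
  also have "\<dots> = 2 powr (- (real n - Hth))"
    by (simp add: powr_add [symmetric])
  finally have factor: "2 powr (- real n) * S\<^sup>2 \<le> 2 powr (- (real n - Hth))" .
  show ?thesis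
  proof (rule Hmin_ge_if_blocks_dominated [OF \<sigma>])
    fix z w
    assume "z \<in> A_idx n"
    then show "gram_form UNIV UNIV (\<psi> z) w \<le> 2 powr (- (real n - Hth)) * Re (qform UNIV \<sigma> w)"
      using dominated factor density_qform_nonneg [OF \<sigma>] by (meson mult_right_mono order_trans)
  qed
qed

end
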